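(* Let $\beta$ be a totally positive quadratic integer with minimal polynomial $x^2 - Ex + C$, where $E, C \in \mathbb{Z}_{\geq 1}$, and let $n \geq 0$ be an integer. If $f \in \mathbb{Z}_{\geq 0}[x]$ satisfies $f(\beta) = E\beta^n$ and $f(x) \neq Ex^n$, then $f$ has the form \[ f(x) = x^{n+1} + a_n x^n + \dots + a_1 x + a_0 \] for some $a_0, \ldots, a_n \in \mathbb{Z}_{\geq 0}$.
   Context: A quadratic integer is a root of a monic irreducible quadratic polynomial in $\mathbb{Z}[x]$; it is totally positive if both it and its conjugate are positive real numbers. *)

theory Defs
  imports "HOL-Computational_Algebra.Polynomial" Complex_Main
begin

end

theory Submission
  imports Defs
begin

text \<open>
  Let \<open>\<beta>' = E - \<beta>\<close> be the conjugate of \<open>\<beta>\<close>. Since \<open>\<beta>\<close> is irrational, every integer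
  polynomial identity at \<open>\<beta>\<close> also holds at \<open>\<beta>'\<close>, so \<open>f(t) = E t\<^sup>n\<close> at both roots.
  Write \<open>u > v > 0\<close> for the two roots; as \<open>(u - v)\<^sup>2 = E\<^sup>2 - 4C\<close> is a positive integer,
  \<open>u \<ge> v + 1\<close>, whence \<open>u\<^sup>2 > u + v = E\<close> and \<open>2u > E\<close>. Comparing single terms of \<open>f(u)\<close>
  with \<open>E u\<^sup>n\<close> then kills all coefficients above \<open>n + 1\<close> and bounds that of \<open>x\<^sup>n\<^sup>+\<^sup>1\<close> by 1.
  If that coefficient were 0, \<open>f(t)/t\<^sup>n\<close> would be a nonnegative combination of powers
  \<open>t\<^sup>i\<^sup>-\<^sup>n\<close> with \<open>i \<le> n\<close>, strictly decreasing unless \<open>f\<close> is a multiple of \<open>x\<^sup>n\<close>; but it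
  takes the value \<open>E\<close> at both \<open>u\<close> and \<open>v\<close>, forcing \<open>f = E x\<^sup>n\<close>.
\<close>

lemma irreducible_quadratic_root_not_rational:
  fixes \<beta> :: real and E C :: int
  assumes irred: "irreducible ([:C, -E, 1:] :: int poly)"
    and root: "\<beta>\<^sup>2 = E * \<beta> - C"
  shows "\<beta> \<notin> \<rat>"
proof
  assume "\<beta> \<in> \<rat>"
  then obtain a b :: int where b: "b > 0" "coprime a b" "\<beta> = of_int a / of_int b"
    by (rule Rats_cases')
  then have a: "of_int a = \<beta> * of_int b"
    by simp
  have "real_of_int (a\<^sup>2 - E * a * b + C * b\<^sup>2) = (of_int b)\<^sup>2 * (\<beta>\<^sup>2 - E * \<beta> + C)"
    unfolding of_int_diff of_int_add of_int_mult of_int_power a by (simp add: algebra_simps power2_eq_square)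
  also have "\<dots> = 0"
    using root by simp
  finally have eq: "a\<^sup>2 - E * a * b + C * b\<^sup>2 = 0"
    by (simp only: of_int_eq_0_iff)
  then have "a\<^sup>2 = b * (E * a - C * b)"
    by (simp add: algebra_simps power2_eq_square)
  then have "b dvd a\<^sup>2"
    by simp
  moreover have "coprime (a\<^sup>2) b"
    using b(2) by simp
  ultimately have "is_unit b"
    by (metis coprime_common_divisor dvd_refl)
  then have "b = 1"
    using b(1) by simp
  then have "C = a * (E - a)"
    using eq by (simp add: algebra_simps power2_eq_square)
  then have "[:C, -E, 1:] = [:-a, 1:] * [:-(E - a), 1:]"
    by (simp add: algebra_simps)
  then have "is_unit [:-a, 1:] \<or> is_unit [:-(E - a), 1::int:]"
    by (rule irreducibleD[OF irred])
  then show False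
    by (simp add: is_unit_poly_iff)
qed

lemma poly_mod_quadratic_linear:
  fixes E C :: int and p :: "int poly"
  shows "\<exists>(a :: int) (b :: int). \<forall>t :: real. t\<^sup>2 = E * t - C \<longrightarrow>
           poly (map_poly real_of_int p) t = a + b * t"
proof (induction p rule: pCons_induct)
  case 0
  show ?case by (rule exI[of _ 0], rule exI[of _ 0]) simp
next
  case (pCons c p)
  then obtain a b :: int
    where ab: "\<And>t :: real. t\<^sup>2 = E * t - C \<Longrightarrow> poly (map_poly real_of_int p) t = a + b * t"
    by blast
  have "poly (map_poly real_of_int (pCons c p)) t = (c - b * C) + (a + b * E) * t"
    if t: "t\<^sup>2 = E * t - C" for t :: real
  proof -
    have "poly (map_poly real_of_int (pCons c p)) t = c + a * t + b * t\<^sup>2"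
      using ab[OF t] by (simp add: map_poly_pCons algebra_simps power2_eq_square)
    then show ?thesis
      by (simp add: t algebra_simps)
  qed
  then show ?case by (metis of_int_add)
qed

lemma poly_of_int_diff:
  fixes p q :: "int poly" and t :: real
  shows "poly (map_poly real_of_int (p - q)) t =
           poly (map_poly real_of_int p) t - poly (map_poly real_of_int q) t"
proof -
  have "map_poly real_of_int (p - q) = map_poly real_of_int p - map_poly real_of_int q"
    by (rule poly_eqI) (simp add: coeff_map_poly)
  then show ?thesis
    by simp
qed

text \<open>Reducing \<open>p - q\<close> modulo the minimal polynomial leaves \<open>a + b t\<close>, and \<open>a + b \<beta> = 0\<close>
  forces \<open>a = b = 0\<close> since \<open>\<beta>\<close> is irrational.\<close>

lemma poly_eq_at_conjugate_root:
  fixes \<beta> \<gamma> :: real and E C :: int and p q :: "int poly"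
  assumes irred: "irreducible ([:C, -E, 1:] :: int poly)"
    and roots: "\<beta>\<^sup>2 = E * \<beta> - C" "\<gamma>\<^sup>2 = E * \<gamma> - C"
    and eq: "poly (map_poly real_of_int p) \<beta> = poly (map_poly real_of_int q) \<beta>"
  shows "poly (map_poly real_of_int p) \<gamma> = poly (map_poly real_of_int q) \<gamma>"
proof -
  obtain a b :: int where ab: "\<And>t :: real. t\<^sup>2 = E * t - C \<Longrightarrow>
      poly (map_poly real_of_int (p - q)) t = a + b * t"
    using poly_mod_quadratic_linear by blast
  have "a + b * \<beta> = 0"
    using ab[OF roots(1)] eq by (simp add: poly_of_int_diff)
  moreover have "b = 0"
  proof (rule ccontr)
    assume "b \<noteq> 0"
    with \<open>a + b * \<beta> = 0\<close> have "\<beta> = - of_int a / of_int b"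
      by (simp add: field_simps)
    then show False
      using irreducible_quadratic_root_not_rational[OF irred roots(1)] by simp
  qed
  ultimately show ?thesis
    using ab[OF roots(2)] by (simp add: poly_of_int_diff)
qed

text \<open>The distance between \<open>\<beta>\<close> and its conjugate \<open>E - \<beta>\<close> is the square root of the
  discriminant \<open>E\<^sup>2 - 4C\<close>, a nonzero integer.\<close>

lemma irreducible_quadratic_root_far_from_conjugate:
  fixes \<beta> :: real and E C :: int
  assumes irred: "irreducible ([:C, -E, 1:] :: int poly)"
    and root: "\<beta>\<^sup>2 = E * \<beta> - C"
  shows "1 \<le> \<bar>2 * \<beta> - E\<bar>"
proof -
  have discr: "(2 * \<beta> - E)\<^sup>2 = of_int (E\<^sup>2 - 4 * C)"
    using root by (simp add: algebra_simps power2_eq_square)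
  have "2 * \<beta> - E \<noteq> 0"
  proof
    assume "2 * \<beta> - E = 0"
    then have "\<beta> = of_int E / 2"
      by simp
    then have "\<beta> \<in> \<rat>"
      by (simp only: Rats_divide Rats_of_int Rats_number_of)
    then show False
      using irreducible_quadratic_root_not_rational[OF irred root] by simp
  qed
  then have "0 < E\<^sup>2 - 4 * C"
    using discr by (metis of_int_0_less_iff zero_less_power2)
  then have "1 \<le> (2 * \<beta> - E)\<^sup>2"
    unfolding discr of_int_1_le_iff by simp
  then show ?thesis
    using abs_le_square_iff[of 1 "2 * \<beta> - E"] by simp
qed

lemma poly_of_int_eq_sum:
  fixes f :: "int poly" and t :: real
  assumes "degree f \<le> N"
  shows "poly (map_poly real_of_int f) t = (\<Sum>i\<le>N. of_int (coeff f i) * t ^ i)"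
proof -
  have "degree (map_poly real_of_int f) \<le> N"
    using assms by (simp add: degree_map_poly)
  then show ?thesis
    by (subst poly_as_sum_of_monoms'[symmetric])
       (auto simp: poly_sum poly_monom coeff_map_poly)
qed

lemma coeff_mult_power_le_poly:
  fixes f :: "int poly" and t :: real
  assumes nonneg: "\<forall>i. coeff f i \<ge> 0" and "t \<ge> 0"
  shows "of_int (coeff f k) * t ^ k \<le> poly (map_poly real_of_int f) t"
proof -
  have "of_int (coeff f k) * t ^ k \<le> (\<Sum>i\<le>max k (degree f). of_int (coeff f i) * t ^ i)"
    by (rule member_le_sum) (use assms in auto)
  also have "\<dots> = poly (map_poly real_of_int f) t"
    by (rule poly_of_int_eq_sum[symmetric]) simp
  finally show ?thesis .
qed

lemma degree_le_if_poly_eq_mult_power: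
  fixes f :: "int poly" and u c :: real
  assumes nonneg: "\<forall>i. coeff f i \<ge> 0" and "1 < u" "c < u\<^sup>2"
    and val: "poly (map_poly real_of_int f) u = c * u ^ n"
  shows "degree f \<le> n + 1"
proof (rule degree_le, intro allI impI)
  fix k assume "n + 1 < k"
  show "coeff f k = 0"
  proof (rule ccontr)
    assume "coeff f k \<noteq> 0"
    then have "1 \<le> coeff f k"
      using nonneg by (simp add: int_one_le_iff_zero_less order_less_le)
    then have "u ^ k \<le> of_int (coeff f k) * u ^ k"
      using \<open>1 < u\<close> by simp
    also have "\<dots> \<le> c * u ^ n"
      using coeff_mult_power_le_poly[OF nonneg, of u k] \<open>1 < u\<close> val by simp
    also have "\<dots> < u ^ (n + 2)"
      using \<open>c < u\<^sup>2\<close> \<open>1 < u\<close> by (simp add: power_add power2_eq_square)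
    also have "\<dots> \<le> u ^ k"
      using \<open>n + 1 < k\<close> \<open>1 < u\<close> by (intro power_increasing) auto
    finally show False by simp
  qed
qed

lemma coeff_Suc_le_1_if_poly_eq_mult_power:
  fixes f :: "int poly" and u c :: real
  assumes nonneg: "\<forall>i. coeff f i \<ge> 0" and "0 < u" "c < 2 * u"
    and val: "poly (map_poly real_of_int f) u = c * u ^ n"
  shows "coeff f (n + 1) \<le> 1"
proof (rule ccontr)
  assume "\<not> coeff f (n + 1) \<le> 1"
  then have "(2 * u) * u ^ n \<le> of_int (coeff f (n + 1)) * u ^ (n + 1)"
    using \<open>0 < u\<close> by (simp add: mult_right_mono)
  also have "\<dots> \<le> c * u ^ n"
    using coeff_mult_power_le_poly[OF nonneg, of u "n + 1"] \<open>0 < u\<close> val by simp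
  finally show False
    using \<open>c < 2 * u\<close> \<open>0 < u\<close> by simp
qed

lemma power_mult_power_less:
  fixes u v :: real
  assumes "0 < v" "v < u" "i < n"
  shows "v ^ n * u ^ i < u ^ n * v ^ i"
proof -
  have "v ^ n * u ^ i = v ^ (n - i) * (u * v) ^ i"
    using \<open>i < n\<close> by (simp add: power_add[symmetric] power_mult_distrib)
  also have "\<dots> < u ^ (n - i) * (u * v) ^ i"
    using assms by (intro mult_strict_right_mono power_strict_mono) auto
  also have "\<dots> = u ^ n * v ^ i"
    using \<open>i < n\<close> by (simp add: power_add[symmetric] power_mult_distrib)
  finally show ?thesis .
qed

text \<open>A nonnegative polynomial of degree at most \<open>n\<close> divided by \<open>t\<^sup>n\<close> is strictly decreasing on
  \<open>t > 0\<close> unless it is a monomial \<open>c x\<^sup>n\<close>.\<close>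

lemma eq_monom_if_agrees_at_two_points:
  fixes f :: "int poly" and u v :: real and c :: int
  assumes nonneg: "\<forall>i. coeff f i \<ge> 0" and "degree f \<le> n" and "0 < v" "v < u"
    and at_u: "poly (map_poly real_of_int f) u = c * u ^ n"
    and at_v: "poly (map_poly real_of_int f) v = c * v ^ n"
  shows "f = monom c n"
proof -
  define d where "d i = of_int (coeff f i) * (u ^ n * v ^ i - v ^ n * u ^ i)" for i
  have d_nonneg: "d i \<ge> 0" if "i \<le> n" for i
    using power_mult_power_less[OF \<open>0 < v\<close> \<open>v < u\<close>, of i n] nonneg that
    by (cases "i = n") (auto simp: d_def)
  have "(\<Sum>i\<le>n. d i) = u ^ n * poly (map_poly real_of_int f) v - v ^ n * poly (map_poly real_of_int f) u"
    unfolding d_def poly_of_int_eq_sum[OF \<open>degree f \<le> n\<close>]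
    by (simp add: algebra_simps sum_distrib_left sum_subtractf)
  also have "\<dots> = 0"
    using at_u at_v by (simp add: algebra_simps)
  finally have d_0: "d i = 0" if "i \<le> n" for i
    using sum_nonneg_eq_0_iff[of "{..n}" d] d_nonneg that by auto
  then have below: "coeff f i = 0" if "i < n" for i
    using d_0[of i] power_mult_power_less[OF \<open>0 < v\<close> \<open>v < u\<close> that] that by (simp add: d_def)
  have above: "coeff f i = 0" if "n < i" for i
    using \<open>degree f \<le> n\<close> that by (simp add: coeff_eq_0)
  have f_eq: "f = monom (coeff f n) n"
    using below above by (intro poly_eqI) (metis coeff_monom linorder_neqE_nat)
  have "of_int (coeff f n) * u ^ n = of_int c * u ^ n"
    using at_u by (subst (asm) f_eq) (simp add: poly_monom map_poly_monom)
  then have "coeff f n = c"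
    using \<open>0 < v\<close> \<open>v < u\<close> by simp
  with f_eq show ?thesis by simp
qed

lemma monic_of_degree_Suc_if_agrees_with_monom:
  fixes f :: "int poly" and u v :: real and E :: int
  assumes nonneg: "\<forall>i. coeff f i \<ge> 0" and "0 < v" "v + 1 \<le> u" "u + v = E"
    and val_u: "poly (map_poly real_of_int f) u = E * u ^ n"
    and val_v: "poly (map_poly real_of_int f) v = E * v ^ n"
    and "f \<noteq> monom E n"
  shows "degree f \<le> n + 1 \<and> coeff f (n + 1) = 1"
proof
  have "E < u\<^sup>2"
  proof -
    have "0 < (u - 1)\<^sup>2"
      using \<open>0 < v\<close> \<open>v + 1 \<le> u\<close> by simp
    then show ?thesis
      using \<open>u + v = E\<close> \<open>v + 1 \<le> u\<close> by (simp add: power2_eq_square algebra_simps)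
  qed
  then show deg: "degree f \<le> n + 1"
    using degree_le_if_poly_eq_mult_power[OF nonneg _ _ val_u] \<open>0 < v\<close> \<open>v + 1 \<le> u\<close>
    by simp
  have "coeff f (n + 1) \<le> 1"
    using coeff_Suc_le_1_if_poly_eq_mult_power[OF nonneg _ _ val_u] \<open>0 < v\<close> \<open>v + 1 \<le> u\<close> \<open>u + v = E\<close>
    by simp
  moreover have "coeff f (n + 1) \<noteq> 0"
  proof
    assume "coeff f (n + 1) = 0"
    with deg have "degree f \<le> n"
      by (metis le_SucE Suc_eq_plus1 leading_coeff_0_iff degree_0 zero_le)
    then have "f = monom E n"
      using eq_monom_if_agrees_at_two_points[OF nonneg _ \<open>0 < v\<close> _ val_u val_v] \<open>v + 1 \<le> u\<close>
      by simp
    with \<open>f \<noteq> monom E n\<close> show False ..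
  qed
  ultimately show "coeff f (n + 1) = 1"
    using nonneg by (metis antisym int_one_le_iff_zero_less order_less_le)
qed

theorem lemma10:
  fixes \<beta> :: real and E C :: int and n :: nat and f :: "int poly"
  assumes E_pos: "E \<ge> 1" and C_pos: "C \<ge> 1"
    and irred: "irreducible ([:C, -E, 1:] :: int poly)"
    and root: "poly (map_poly real_of_int [:C, -E, 1:]) \<beta> = 0"
    and tot_pos: "\<beta> > 0" "real_of_int E - \<beta> > 0"
    and f_nonneg: "\<forall>i. coeff f i \<ge> 0"
    and f_val: "poly (map_poly real_of_int f) \<beta> = real_of_int E * \<beta> ^ n"
    and f_ne: "f \<noteq> monom E n"
  shows "\<exists>a :: nat \<Rightarrow> int. (\<forall>i\<le>n. a i \<ge> 0) \<and>
           f = monom 1 (n + 1) + (\<Sum>i\<le>n. monom (a i) i)"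
proof -
  have \<beta>_root: "\<beta>\<^sup>2 = E * \<beta> - C"
    using root by (simp add: map_poly_pCons algebra_simps power2_eq_square)
  define \<beta>' where "\<beta>' = E - \<beta>"
  have \<beta>'_root: "\<beta>'\<^sup>2 = E * \<beta>' - C"
    using \<beta>_root by (simp add: \<beta>'_def algebra_simps power2_eq_square)
  have f_val': "poly (map_poly real_of_int f) \<beta>' = E * \<beta>' ^ n"
    using poly_eq_at_conjugate_root[OF irred \<beta>_root \<beta>'_root, of f "monom E n"] f_val
    by (simp add: map_poly_monom poly_monom)
  define u v where "u = max \<beta> \<beta>'" and "v = min \<beta> \<beta>'"
  have "v + 1 \<le> u"
    using irreducible_quadratic_root_far_from_conjugate[OF irred \<beta>_root]
    by (simp add: u_def v_def \<beta>'_def abs_if max_def min_def split: if_splits)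
  moreover have "0 < v" "u + v = E"
    using tot_pos by (simp_all add: u_def v_def \<beta>'_def)
  moreover have "poly (map_poly real_of_int f) u = E * u ^ n"
    and "poly (map_poly real_of_int f) v = E * v ^ n"
    using f_val f_val' by (simp_all add: u_def v_def max_def min_def)
  ultimately have "degree f \<le> n + 1" "coeff f (n + 1) = 1"
    using monic_of_degree_Suc_if_agrees_with_monom[OF f_nonneg] f_ne by blast+
  then have "f = monom 1 (n + 1) + (\<Sum>i\<le>n. monom (coeff f i) i)"
    using poly_as_sum_of_monoms'[of f "n + 1"] by (simp add: add.commute)
  with f_nonneg show ?thesis
    by blast
qed

end
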